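(* Let $0<\lambda<\frac{5-\sqrt{21}}{2}$ and let $K$ be the attractor of the IFS $f_1(x)=\lambda x$, $f_2(x)=\lambda x+2\lambda$, $f_3(x)=\lambda x+3\lambda-\lambda^2$, $f_4(x)=\lambda x+1-\lambda$. Then $U_{2i}=\emptyset$ for every integer $i\ge3$ such that $2i$ is not a power of $2$.
   Context: A coding of $x\in K$ is a sequence $(i_n)\in\{1,2,3,4\}^{\mathbb{N}}$ with $x=\lim_{n\to\infty}f_{i_1}\circ\cdots\circ f_{i_n}(0)$. $U_k$ denotes the set of $x\in K$ having exactly $k$ distinct codings. *)

theory Defs
  imports "HOL-Analysis.Analysis"
begin

definition ifs :: "real \<Rightarrow> nat \<Rightarrow> real \<Rightarrow> real" where
  "ifs lam i x =
     (if i = 1 then lam * x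
      else if i = 2 then lam * x + 2 * lam
      else if i = 3 then lam * x + 3 * lam - lam ^ 2
      else lam * x + 1 - lam)"

text \<open>comp_pt lam c n = f_{c 0} o f_{c 1} o ... o f_{c (n-1)} (0)
  (sequences are indexed from 0 instead of 1).\<close>
definition comp_pt :: "real \<Rightarrow> (nat \<Rightarrow> nat) \<Rightarrow> nat \<Rightarrow> real" where
  "comp_pt lam c n = foldr (\<lambda>i y. ifs lam i y) (map c [0..<n]) 0"

definition codings :: "real \<Rightarrow> real \<Rightarrow> (nat \<Rightarrow> nat) set" where
  "codings lam x = {c. (\<forall>n. c n \<in> {1,2,3,4}) \<and> (comp_pt lam c \<longlonglongrightarrow> x)}"

definition attractor :: "real \<Rightarrow> real set" where
  "attractor lam = (THE K. K \<noteq> {} \<and> compact K \<and> K = (\<Union>i\<in>{1,2,3,4::nat}. ifs lam i ` K))"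

definition U :: "real \<Rightarrow> nat \<Rightarrow> real set" where
  "U lam k = {x \<in> attractor lam. finite (codings lam x) \<and> card (codings lam x) = k}"

end

theory Submission
  imports Defs
begin

(*
  A coding c has value \<Sum>k. \<lambda>^k t(c k), where t(i) = f_i(0). Of the first-level
  cylinders f_i([0,1]) only f_2([0,1]) and f_3([0,1]) meet, and their intersection
  [3\<lambda> - \<lambda>^2, 3\<lambda>] is exactly f_2 f_4([0,1]) = f_3 f_1([0,1]); the bound on \<lambda>, i.e.
  \<lambda>^2 - 5\<lambda> + 1 > 0, keeps all other second-level cylinders of f_2 and f_3 away from it.
  Since f_2 \<circ> f_4 = f_3 \<circ> f_1, a point of the overlap has twice as many codings as its
  preimage under this map, while at any other point the first digit is forced and removing
  it preserves the number of codings. Two distinct codings eventually separate, so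
  iterating shows that every finite nonempty set of codings has a power of 2 as its
  cardinality.
*)

definition coding_value :: "real \<Rightarrow> (nat \<Rightarrow> nat) \<Rightarrow> real" where
  "coding_value lam c = (\<Sum>k. lam ^ k * ifs lam (c k) 0)"

definition coding_set :: "real \<Rightarrow> real \<Rightarrow> (nat \<Rightarrow> nat) set" where
  "coding_set lam x = {c. (\<forall>n. c n \<in> {1,2,3,4}) \<and> coding_value lam c = x}"

lemma ifs_eq_affine: "ifs lam i x = lam * x + ifs lam i 0"
  by (simp add: ifs_def)

lemma foldr_ifs_eq_sum:
  "foldr (\<lambda>i y. ifs lam i y) (map c [0..<n]) y = (\<Sum>k<n. lam ^ k * ifs lam (c k) 0) + lam ^ n * y"
proof (induction n arbitrary: y)
  case (Suc n)
  show ?case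
    using Suc[of "ifs lam (c n) y"] by (simp add: ifs_eq_affine[of lam "c n" y] algebra_simps)
qed simp

lemma comp_pt_eq_partial_sum: "comp_pt lam c n = (\<Sum>k<n. lam ^ k * ifs lam (c k) 0)"
  by (simp add: comp_pt_def foldr_ifs_eq_sum)

lemma case_nat_head_tail: "case_nat (c 0) (c \<circ> Suc) = c"
  by (rule ext) (simp split: nat.split)

lemma inj_on_case_nat: "inj_on (case_nat a) A"
  by (rule inj_onI) (metis nat.case(2) ext)

lemma case_nat_in_digits_iff:
  "(\<forall>n. case_nat a e n \<in> D) \<longleftrightarrow> a \<in> D \<and> (\<forall>n. e n \<in> D)"
  by (metis nat.case(1) nat.case(2) not0_implies_Suc)

locale ifs_contraction =
  fixes lam :: real
  assumes pos: "0 < lam" and lt1: "lam < 1"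
begin

lemma summable_coding_series: "summable (\<lambda>k. lam ^ k * ifs lam (c k) 0)"
proof (rule summable_comparison_test)
  have "0 \<le> lam ^ 2" "lam ^ 2 \<le> 1"
    using pos lt1 by (simp_all add: power_le_one)
  then have "\<bar>ifs lam i 0\<bar> \<le> 3" for i
    using pos lt1 unfolding ifs_def by (smt (verit))
  then show "\<exists>N. \<forall>n\<ge>N. norm (lam ^ n * ifs lam (c n) 0) \<le> 3 * lam ^ n"
    using pos by (auto simp: abs_mult mult.commute intro!: mult_right_mono)
  show "summable (\<lambda>n. 3 * lam ^ n)"
    using pos lt1 by (intro summable_mult summable_geometric) auto
qed

lemma codings_eq_coding_set: "codings lam x = coding_set lam x"
proof -
  have "comp_pt lam c \<longlonglongrightarrow> x \<longleftrightarrow> coding_value lam c = x" for c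
    using summable_LIMSEQ[OF summable_coding_series[of c]] LIMSEQ_unique
    by (auto simp: comp_pt_eq_partial_sum[abs_def] coding_value_def)
  then show ?thesis
    by (simp add: codings_def coding_set_def)
qed

lemma coding_value_case_nat:
  "coding_value lam (case_nat a e) = ifs lam a 0 + lam * coding_value lam e"
proof -
  have "coding_value lam (case_nat a e) - ifs lam a 0 = (\<Sum>k. lam * (lam ^ k * ifs lam (e k) 0))"
    using suminf_split_head[OF summable_coding_series[of "case_nat a e"]]
    by (simp add: coding_value_def mult.assoc)
  also have "\<dots> = lam * coding_value lam e"
    unfolding coding_value_def by (rule suminf_mult[OF summable_coding_series])
  finally show ?thesis
    by simp
qed

lemma case_nat_in_coding_set_iff:
  "case_nat a e \<in> coding_set lam x \<longleftrightarrow>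
     a \<in> {1,2,3,4} \<and> e \<in> coding_set lam ((x - ifs lam a 0) / lam)"
  unfolding coding_set_def mem_Collect_eq case_nat_in_digits_iff coding_value_case_nat
  using pos by (auto simp: field_simps)

lemma coding_set_eq_image_case_nat:
  assumes "\<forall>e\<in>coding_set lam x. e 0 = a" and "a \<in> {1,2,3,4}"
  shows "coding_set lam x = case_nat a ` coding_set lam ((x - ifs lam a 0) / lam)"
proof (intro equalityI subsetI)
  fix e
  assume "e \<in> coding_set lam x"
  then have "case_nat a (e \<circ> Suc) \<in> coding_set lam x" and "e = case_nat a (e \<circ> Suc)"
    using assms(1) case_nat_head_tail[of e] by auto
  then show "e \<in> case_nat a ` coding_set lam ((x - ifs lam a 0) / lam)"
    using case_nat_in_coding_set_iff by blast
qed (use assms(2) case_nat_in_coding_set_iff in auto)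

lemma case_nat2_in_coding_set_iff:
  "case_nat a (case_nat b e) \<in> coding_set lam x \<longleftrightarrow>
     a \<in> {1,2,3,4} \<and> b \<in> {1,2,3,4} \<and>
     e \<in> coding_set lam ((x - ifs lam a 0 - lam * ifs lam b 0) / lam ^ 2)"
proof -
  have "((x - ifs lam a 0) / lam - ifs lam b 0) / lam = (x - ifs lam a 0 - lam * ifs lam b 0) / lam ^ 2"
    using pos by (simp add: field_simps power2_eq_square)
  then show ?thesis
    by (simp add: case_nat_in_coding_set_iff)
qed

end

locale ifs_small_ratio = ifs_contraction +
  assumes separation: "lam ^ 2 - 5 * lam + 1 > 0"
begin

lemma less_quarter: "lam < 1 / 4"
proof -
  have "lam * 4 < lam * (5 - lam)"
    using pos lt1 by (intro mult_strict_left_mono) auto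
  then show ?thesis
    using separation by (simp add: power2_eq_square algebra_simps)
qed

lemma power2_less_self: "lam ^ 2 < lam"
  using pos lt1 by (simp add: power2_eq_square)

lemma ifs_offset_bounds: "i \<in> {1,2,3,4} \<Longrightarrow> 0 \<le> ifs lam i 0 \<and> ifs lam i 0 \<le> 1 - lam"
  using pos less_quarter power2_less_self separation by (auto simp: ifs_def)

lemma coding_value_bounds:
  assumes "\<forall>n. c n \<in> {1,2,3,4}"
  shows "0 \<le> coding_value lam c \<and> coding_value lam c \<le> 1"
proof
  show "0 \<le> coding_value lam c"
    unfolding coding_value_def
    using assms ifs_offset_bounds pos by (intro suminf_nonneg summable_coding_series) simp
  have "coding_value lam c \<le> (\<Sum>k. (1 - lam) * lam ^ k)"
    unfolding coding_value_def
  proof (rule suminf_le)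
    show "lam ^ n * ifs lam (c n) 0 \<le> (1 - lam) * lam ^ n" for n
      using assms ifs_offset_bounds[of "c n"] pos by (simp add: mult.commute mult_left_mono)
    show "summable (\<lambda>k. (1 - lam) * lam ^ k)"
      using pos lt1 by (intro summable_mult summable_geometric) auto
  qed (rule summable_coding_series)
  also have "\<dots> = 1"
    using pos lt1 by (simp add: suminf_mult suminf_geometric)
  finally show "coding_value lam c \<le> 1" .
qed

lemma coding_value_case_nat_bounds:
  assumes "\<forall>n. e n \<in> {1,2,3,4}"
  shows "ifs lam a 0 \<le> coding_value lam (case_nat a e) \<and>
         coding_value lam (case_nat a e) \<le> ifs lam a 0 + lam"
  using coding_value_bounds[OF assms] pos mult_left_le[of "coding_value lam e" lam]
  by (simp add: coding_value_case_nat)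

lemma coding_set_first_digit_bounds:
  assumes "e \<in> coding_set lam x"
  shows "ifs lam (e 0) 0 \<le> x \<and> x \<le> ifs lam (e 0) 0 + lam"
  using assms coding_value_case_nat_bounds[of "e \<circ> Suc" "e 0"]
  by (simp add: coding_set_def case_nat_head_tail)

lemma distinct_first_digits_imp_overlap:
  assumes "c \<in> coding_set lam x" and "d \<in> coding_set lam x" and "c 0 \<noteq> d 0"
  shows "3 * lam - lam ^ 2 \<le> x \<and> x \<le> 3 * lam"
proof -
  have "c 0 \<in> {1,2,3,4}" and "d 0 \<in> {1,2,3,4}"
    using assms(1,2) by (auto simp: coding_set_def)
  then show ?thesis
    using coding_set_first_digit_bounds[OF assms(1)] coding_set_first_digit_bounds[OF assms(2)]
      assms(3) pos less_quarter power2_less_self separation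
    by (auto simp: ifs_def)
qed

lemma overlap_coding_prefixes:
  assumes "3 * lam - lam ^ 2 \<le> x" and "x \<le> 3 * lam" and "e \<in> coding_set lam x"
  shows "(e 0 = 2 \<and> e 1 = 4) \<or> (e 0 = 3 \<and> e 1 = 1)"
proof -
  define y where "y = (x - ifs lam (e 0) 0) / lam"
  have "case_nat (e 0) (e \<circ> Suc) \<in> coding_set lam x"
    using assms(3) by (simp add: case_nat_head_tail)
  then have digit0: "e 0 \<in> {1,2,3,4}" and tail: "e \<circ> Suc \<in> coding_set lam y"
    unfolding y_def case_nat_in_coding_set_iff by auto
  have digit1: "e 1 \<in> {1,2,3,4}"
    using tail by (auto simp: coding_set_def)
  have y_bounds: "ifs lam (e 1) 0 \<le> y \<and> y \<le> ifs lam (e 1) 0 + lam"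
    using coding_set_first_digit_bounds[OF tail] by simp
  have y_eq: "lam * y = x - ifs lam (e 0) 0"
    using pos by (simp add: y_def)
  have "e 0 = 2 \<or> e 0 = 3"
    using digit0 coding_set_first_digit_bounds[OF assms(3)] assms(1,2)
      pos less_quarter power2_less_self
    by (auto simp: ifs_def)
  then show ?thesis
  proof
    assume "e 0 = 2"
    then have "lam * (1 - lam) \<le> lam * y"
      using assms(1) y_eq by (simp add: ifs_def power2_eq_square algebra_simps)
    then have "1 - lam \<le> y"
      using pos by simp
    then show ?thesis
      using \<open>e 0 = 2\<close> digit1 y_bounds pos less_quarter power2_less_self separation
      by (auto simp: ifs_def)
  next
    assume "e 0 = 3"
    then have "lam * y \<le> lam * lam"
      using assms(2) y_eq by (simp add: ifs_def power2_eq_square algebra_simps)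
    then have "y \<le> lam"
      using pos by simp
    then show ?thesis
      using \<open>e 0 = 3\<close> digit1 y_bounds pos less_quarter power2_less_self by (auto simp: ifs_def)
  qed
qed

(* z is the preimage of x under the common map f_2 \<circ> f_4 = f_3 \<circ> f_1. *)
lemma coding_set_overlap:
  assumes "3 * lam - lam ^ 2 \<le> x" and "x \<le> 3 * lam"
  defines "z \<equiv> (x - 3 * lam + lam ^ 2) / lam ^ 2"
  shows "coding_set lam x =
           case_nat 2 ` case_nat 4 ` coding_set lam z \<union> case_nat 3 ` case_nat 1 ` coding_set lam z"
proof -
  have prefix_iff: "case_nat a (case_nat b e) \<in> coding_set lam x \<longleftrightarrow> e \<in> coding_set lam z"
    if "(a = 2 \<and> b = 4) \<or> (a = 3 \<and> b = 1)" for a b e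
    using that by (auto simp: case_nat2_in_coding_set_iff z_def ifs_def power2_eq_square algebra_simps)
  show ?thesis
  proof (intro equalityI subsetI)
    fix e
    assume e: "e \<in> coding_set lam x"
    have "e = case_nat (e 0) (case_nat (e 1) (e \<circ> Suc \<circ> Suc))"
      by (metis case_nat_head_tail comp_apply One_nat_def)
    then show "e \<in> case_nat 2 ` case_nat 4 ` coding_set lam z \<union>
                   case_nat 3 ` case_nat 1 ` coding_set lam z"
      using overlap_coding_prefixes[OF assms(1,2) e] e prefix_iff by (metis UnI1 UnI2 image_eqI)
  qed (use prefix_iff in auto)
qed

lemma card_coding_set_overlap:
  assumes "3 * lam - lam ^ 2 \<le> x" and "x \<le> 3 * lam" and "finite (coding_set lam x)"
  shows "\<exists>z. finite (coding_set lam z) \<and> card (coding_set lam x) = 2 * card (coding_set lam z)"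
proof -
  define z where "z = (x - 3 * lam + lam ^ 2) / lam ^ 2"
  define A where "A a b = case_nat a ` case_nat b ` coding_set lam z" for a b :: nat
  have split: "coding_set lam x = A 2 4 \<union> A 3 1"
    using coding_set_overlap[OF assms(1,2)] by (simp add: A_def z_def)
  have card_A: "card (A a b) = card (coding_set lam z)" for a b
    unfolding A_def by (simp add: card_image inj_on_case_nat)
  have "finite (A 2 4)"
    using assms(3) split by simp
  then have finite_z: "finite (coding_set lam z)"
    unfolding A_def by (simp add: finite_image_iff inj_on_case_nat)
  have "A 2 4 \<inter> A 3 1 = {}"
    by (auto simp: A_def dest: fun_cong[where x = 0])
  then have "card (coding_set lam x) = card (A 2 4) + card (A 3 1)"
    unfolding split using finite_z by (intro card_Un_disjoint) (simp_all add: A_def)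
  then show ?thesis
    using finite_z card_A by auto
qed

lemma card_coding_set_distinct_first_digits:
  assumes "c \<in> coding_set lam x" and "d \<in> coding_set lam x" and "c 0 \<noteq> d 0"
    and "finite (coding_set lam x)"
  shows "\<exists>z. coding_set lam z \<noteq> {} \<and> finite (coding_set lam z) \<and>
             card (coding_set lam x) = 2 * card (coding_set lam z)"
proof -
  obtain z where z: "finite (coding_set lam z)" "card (coding_set lam x) = 2 * card (coding_set lam z)"
    using distinct_first_digits_imp_overlap[OF assms(1-3)] card_coding_set_overlap assms(4) by blast
  have "card (coding_set lam x) \<noteq> 0"
    using assms(1,4) by auto
  then show ?thesis
    using z by auto
qed

lemma card_coding_set_halves:
  assumes "c \<in> coding_set lam x" and "d \<in> coding_set lam x" and "c k \<noteq> d k"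
    and "finite (coding_set lam x)"
  shows "\<exists>z. coding_set lam z \<noteq> {} \<and> finite (coding_set lam z) \<and>
             card (coding_set lam x) = 2 * card (coding_set lam z)"
  using assms
proof (induction k arbitrary: x c d)
  case 0
  then show ?case
    using card_coding_set_distinct_first_digits by simp
next
  case (Suc k)
  show ?case
  proof (cases "\<forall>e\<in>coding_set lam x. e 0 = c 0")
    case False
    then show ?thesis
      using card_coding_set_distinct_first_digits Suc.prems by metis
  next
    case True
    define y where "y = (x - ifs lam (c 0) 0) / lam"
    have "c 0 \<in> {1,2,3,4}"
      using Suc.prems(1) by (simp add: coding_set_def)
    then have x_eq: "coding_set lam x = case_nat (c 0) ` coding_set lam y"
      unfolding y_def by (rule coding_set_eq_image_case_nat[OF True])
    have "c \<circ> Suc \<in> coding_set lam y" "d \<circ> Suc \<in> coding_set lam y"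
      using Suc.prems(1,2) True case_nat_in_coding_set_iff[of "c 0" _ x] case_nat_head_tail
      unfolding y_def by metis+
    moreover have "finite (coding_set lam y)"
      using Suc.prems(4) x_eq by (simp add: finite_image_iff inj_on_case_nat)
    moreover have "card (coding_set lam x) = card (coding_set lam y)"
      using x_eq by (simp add: card_image inj_on_case_nat)
    ultimately show ?thesis
      using Suc.IH[of "c \<circ> Suc" y "d \<circ> Suc"] Suc.prems(3) by (simp add: comp_def)
  qed
qed

lemma card_coding_set_power_of_two:
  assumes "finite (coding_set lam x)" and "coding_set lam x \<noteq> {}"
  shows "\<exists>N. card (coding_set lam x) = 2 ^ N"
  using assms
proof (induction "card (coding_set lam x)" arbitrary: x rule: less_induct)
  case less
  show ?case
  proof (cases "card (coding_set lam x) = 1")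
    case True
    then show ?thesis
      by (metis power_0)
  next
    case False
    obtain c where "c \<in> coding_set lam x"
      using less.prems(2) by blast
    moreover have "coding_set lam x \<noteq> {c}"
      using False by auto
    ultimately obtain d where cd: "c \<in> coding_set lam x" "d \<in> coding_set lam x" "c \<noteq> d"
      by blast
    then obtain k where "c k \<noteq> d k"
      by (meson ext)
    then obtain z where z: "coding_set lam z \<noteq> {}" "finite (coding_set lam z)"
      "card (coding_set lam x) = 2 * card (coding_set lam z)"
      using card_coding_set_halves cd(1,2) less.prems(1) by blast
    then have "card (coding_set lam z) < card (coding_set lam x)"
      by (simp add: card_gt_0_iff)
    then obtain N where "card (coding_set lam z) = 2 ^ N"
      using less.hyps z(1,2) by blast
    then show ?thesis
      using z(3) by (metis power_Suc)
  qed
qed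

end

lemma ifs_small_ratio_below_root:
  assumes "0 < lam" and "lam < (5 - sqrt 21) / 2"
  shows "ifs_small_ratio lam"
proof
  have "9 / 2 < sqrt 21"
    by (rule real_less_rsqrt) (simp add: power2_eq_square)
  moreover have "sqrt 21 < 5"
    using real_sqrt_less_mono[of 21 25] by simp
  ultimately have "(lam - (5 - sqrt 21) / 2) * (lam - (5 + sqrt 21) / 2) > 0"
    using assms(2) by (intro mult_neg_neg) auto
  then show "lam ^ 2 - 5 * lam + 1 > 0"
    by (simp add: field_simps power2_eq_square)
  show "0 < lam" "lam < 1"
    using assms \<open>9 / 2 < sqrt 21\<close> by auto
qed

theorem lemma2p31:
  fixes lam :: real and i :: nat
  assumes "0 < lam" and "lam < (5 - sqrt 21) / 2"
    and "i \<ge> 3" and "\<not> (\<exists>m::nat. 2 * i = 2 ^ m)"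
  shows "U lam (2 * i) = {}"
proof (rule ccontr)
  interpret ifs_small_ratio lam
    using ifs_small_ratio_below_root[OF assms(1,2)] .
  assume "U lam (2 * i) \<noteq> {}"
  then obtain x where "finite (coding_set lam x)" "card (coding_set lam x) = 2 * i"
    by (auto simp: U_def codings_eq_coding_set)
  moreover have "coding_set lam x \<noteq> {}"
    using calculation assms(3) by auto
  ultimately show False
    using card_coding_set_power_of_two assms(4) by metis
qed

end
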